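(* Every dappled patch $G$ has a homomorphism (of dappled graphs) to the dappled triangular grid $\mathbf{T}$.
   Context: A patch is a connected plane graph all of whose faces, except possibly the outer face, have length three. A hued graph is a graph $G$ with a proper coloring $\psi_G:V(G)\to\mathbb{Z}_3$ (hue); a dappled graph is a hued graph $G$ with additionally a proper coloring $\varphi_G:V(G)\to\mathbb{Z}_2^2$ (color). A dappled patch is a patch that is a dappled graph. A homomorphism of dappled graphs $f:V(G)\to V(H)$ maps adjacent vertices to adjacent vertices and preserves both hue and color. The dappled triangular grid $\mathbf{T}$ has vertex set $\mathbb{Z}^2$, with $(i_1,j_1)$ and $(i_2,j_2)$ adjacent iff $(i_2-i_1,j_2-j_1)\in\{\pm(1,0),\pm(0,1),\pm(1,1)\}$, hue $(i+j)\bmod 3$ and color $(i\bmod 2,j\bmod 2)$ at vertex $(i,j)$. *)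

theory Defs
  imports Main "HOL-Library.Numeral_Type"
begin

definition simple_graph :: "'a set \<Rightarrow> ('a \<Rightarrow> 'a \<Rightarrow> bool) \<Rightarrow> bool" where
  "simple_graph V E \<longleftrightarrow> finite V \<and> (\<forall>u v. E u v \<longrightarrow> u \<in> V \<and> v \<in> V)
     \<and> (\<forall>u v. E u v \<longrightarrow> E v u) \<and> (\<forall>u. \<not> E u u)"

definition connected_graph :: "'a set \<Rightarrow> ('a \<Rightarrow> 'a \<Rightarrow> bool) \<Rightarrow> bool" where
  "connected_graph V E \<longleftrightarrow> V \<noteq> {} \<and> (\<forall>u\<in>V. \<forall>v\<in>V. E\<^sup>*\<^sup>* u v)"

text \<open>Combinatorial maps (rotation systems): darts are ordered pairs (u,v) with E u v;
  sigma cyclically permutes the darts leaving each vertex.\<close>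
definition darts :: "('a \<Rightarrow> 'a \<Rightarrow> bool) \<Rightarrow> ('a \<times> 'a) set" where
  "darts E = {(u, v). E u v}"

definition orb :: "('b \<Rightarrow> 'b) \<Rightarrow> 'b \<Rightarrow> 'b set" where
  "orb f x = {(f ^^ n) x | n. True}"

definition rotation_system :: "('a \<Rightarrow> 'a \<Rightarrow> bool) \<Rightarrow> ('a \<times> 'a \<Rightarrow> 'a \<times> 'a) \<Rightarrow> bool" where
  "rotation_system E \<sigma> \<longleftrightarrow> bij_betw \<sigma> (darts E) (darts E)
     \<and> (\<forall>d\<in>darts E. fst (\<sigma> d) = fst d)
     \<and> (\<forall>d\<in>darts E. \<forall>d'\<in>darts E. fst d = fst d' \<longrightarrow> d' \<in> orb \<sigma> d)"

text \<open>Face permutation: a face is traversed by reversing the dart and rotating.\<close>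
definition face_map :: "('a \<times> 'a \<Rightarrow> 'a \<times> 'a) \<Rightarrow> 'a \<times> 'a \<Rightarrow> 'a \<times> 'a" where
  "face_map \<sigma> d = \<sigma> (snd d, fst d)"

definition faces :: "('a \<Rightarrow> 'a \<Rightarrow> bool) \<Rightarrow> ('a \<times> 'a \<Rightarrow> 'a \<times> 'a) \<Rightarrow> ('a \<times> 'a) set set" where
  "faces E \<sigma> = {orb (face_map \<sigma>) d | d. d \<in> darts E}"

text \<open>A connected map is planar (genus 0) iff Euler's formula V - E + F = 2 holds
  (the edgeless one-vertex graph is trivially plane).\<close>
definition plane_map :: "'a set \<Rightarrow> ('a \<Rightarrow> 'a \<Rightarrow> bool) \<Rightarrow> ('a \<times> 'a \<Rightarrow> 'a \<times> 'a) \<Rightarrow> bool" where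
  "plane_map V E \<sigma> \<longleftrightarrow> rotation_system E \<sigma> \<and>
     (darts E = {} \<or>
      int (card V) - int (card (darts E)) div 2 + int (card (faces E \<sigma>)) = 2)"

text \<open>A patch: a connected plane graph all of whose faces, except possibly the outer
  face f0, have length three (face length = number of darts in the facial walk).\<close>
definition patch :: "'a set \<Rightarrow> ('a \<Rightarrow> 'a \<Rightarrow> bool) \<Rightarrow> bool" where
  "patch V E \<longleftrightarrow> simple_graph V E \<and> connected_graph V E \<and>
     (\<exists>\<sigma>. plane_map V E \<sigma> \<and> (\<exists>f0. \<forall>f\<in>faces E \<sigma>. f \<noteq> f0 \<longrightarrow> card f = 3))"

definition proper_coloring :: "'a set \<Rightarrow> ('a \<Rightarrow> 'a \<Rightarrow> bool) \<Rightarrow> ('a \<Rightarrow> 'c) \<Rightarrow> bool" where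
  "proper_coloring V E c \<longleftrightarrow> (\<forall>u v. E u v \<longrightarrow> c u \<noteq> c v)"

definition dappled :: "'a set \<Rightarrow> ('a \<Rightarrow> 'a \<Rightarrow> bool) \<Rightarrow> ('a \<Rightarrow> 3) \<Rightarrow> ('a \<Rightarrow> 2 \<times> 2) \<Rightarrow> bool" where
  "dappled V E \<psi> \<phi> \<longleftrightarrow> proper_coloring V E \<psi> \<and> proper_coloring V E \<phi>"

definition T_adj :: "int \<times> int \<Rightarrow> int \<times> int \<Rightarrow> bool" where
  "T_adj p q \<longleftrightarrow> (fst q - fst p, snd q - snd p) \<in>
     {(1,0), (-1,0), (0,1), (0,-1), (1,1), (-1,-1)}"

definition T_hue :: "int \<times> int \<Rightarrow> 3" where
  "T_hue p = of_int (fst p + snd p)"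

definition T_color :: "int \<times> int \<Rightarrow> 2 \<times> 2" where
  "T_color p = (of_int (fst p), of_int (snd p))"

definition dappled_hom_to_T ::
  "'a set \<Rightarrow> ('a \<Rightarrow> 'a \<Rightarrow> bool) \<Rightarrow> ('a \<Rightarrow> 3) \<Rightarrow> ('a \<Rightarrow> 2 \<times> 2) \<Rightarrow> ('a \<Rightarrow> int \<times> int) \<Rightarrow> bool" where
  "dappled_hom_to_T V E \<psi> \<phi> f \<longleftrightarrow>
     (\<forall>u v. E u v \<longrightarrow> T_adj (f u) (f v)) \<and>
     (\<forall>v\<in>V. T_hue (f v) = \<psi> v \<and> T_color (f v) = \<phi> v)"

end

(*
  Each edge uv of a dappled graph determines a unique unit step of T, namely the one whose hue
  and color differences are psi v - psi u and phi v - phi u: the six unit steps realize each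
  pair (nonzero hue difference, nonzero color difference) exactly once.  These steps are
  antisymmetric and sum to zero around every triangle, so each of their two coordinates is an
  integer 1-form on the patch that is closed around every inner face.

  On a connected plane graph such a form is a gradient.  Otherwise it would be linearly
  independent from the gradients of |V| - 1 vertex indicators and from |F| - 1 forms supported
  on dual paths, each of which has circulation 1 around one inner face and 0 around the others:
  |V| + |F| - 1 independent forms in a space of dimension |E|, against Euler's formula
  |V| - |E| + |F| = 2.  The potentials differ by integers along edges, so after a translation
  that matches hue and color at one vertex they define the homomorphism to T.
*)
theory Submission
  imports Defs "HOL-Library.Function_Algebras" "HOL-Library.Product_Plus" "HOL.Real_Vector_Spaces"
begin

section \<open>Orbits of a permutation of a finite set\<close>

lemma funpow_funpow: "(f ^^ m) ((f ^^ n) x) = (f ^^ (m + n)) x"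
  by (simp add: funpow_add)

lemma orb_iff: "y \<in> orb f x \<longleftrightarrow> (\<exists>n. y = (f ^^ n) x)"
  by (auto simp: orb_def)

lemma funpow_in_orb: "(f ^^ n) x \<in> orb f x"
  by (auto simp: orb_iff)

lemma orb_self: "x \<in> orb f x"
  using funpow_in_orb[where n=0] by simp

lemma orb_step: "f x \<in> orb f x"
  using funpow_in_orb[where n=1] by simp

lemma image_orb_subset: "f ` orb f x \<subseteq> orb f x"
  by (auto simp: orb_iff) (metis comp_apply funpow.simps(2))

lemma orb_subset_orb: "y \<in> orb f x \<Longrightarrow> orb f y \<subseteq> orb f x"
  by (auto simp: orb_iff funpow_funpow)

lemma orb_subset:
  assumes "f ` D \<subseteq> D" "x \<in> D"
  shows "orb f x \<subseteq> D"
proof -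
  have "(f ^^ n) x \<in> D" for n
    using assms by (induction n) auto
  then show ?thesis
    by (auto simp: orb_iff)
qed

lemma funpow_cancel:
  assumes f: "bij_betw f D D" and x: "x \<in> D" and eq: "(f ^^ i) x = (f ^^ j) x" and "i \<le> j"
  shows "(f ^^ (j - i)) x = x"
proof -
  have inj: "inj_on (f ^^ i) D" and maps: "(f ^^ (j - i)) x \<in> D"
    using bij_betw_funpow[OF f] x by (auto simp: bij_betw_def)
  have "(f ^^ i) ((f ^^ (j - i)) x) = (f ^^ i) x"
    using eq \<open>i \<le> j\<close> by (simp add: funpow_funpow)
  then show ?thesis using inj_onD[OF inj _ maps x] by blast
qed

lemma funpow_periodic:
  assumes f: "bij_betw f D D" and "finite D" and x: "x \<in> D"
  obtains n where "n > 0" "(f ^^ n) x = x"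
proof -
  have "range (\<lambda>k. (f ^^ k) x) \<subseteq> D"
    using bij_betw_funpow[OF f] x by (auto simp: bij_betw_def)
  then have "\<not> inj (\<lambda>k. (f ^^ k) x)"
    using \<open>finite D\<close> finite_imageD finite_subset infinite_UNIV_nat by blast
  then obtain i j where "i < j" "(f ^^ i) x = (f ^^ j) x"
    by (auto simp: inj_def) (metis linorder_neqE_nat)
  with funpow_cancel[OF f x] show ?thesis
    by (intro that[of "j - i"]) auto
qed

lemma funpow_mod:
  assumes "(f ^^ n) x = x"
  shows "(f ^^ m) x = (f ^^ (m mod n)) x"
proof -
  have "((f ^^ n) ^^ k) x = x" for k
    using assms by (induction k) auto
  then have "(f ^^ (m mod n)) ((f ^^ (n * (m div n))) x) = (f ^^ (m mod n)) x"
    by (simp add: funpow_mult[symmetric])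
  then show ?thesis
    by (metis comp_apply funpow_add mod_mult_div_eq)
qed

lemma orb_cycle:
  assumes f: "bij_betw f D D" and "finite D" and x: "x \<in> D"
  obtains n where "n > 0" "(f ^^ n) x = x" "inj_on (\<lambda>k. (f ^^ k) x) {..<n}"
    "orb f x = (\<lambda>k. (f ^^ k) x) ` {..<n}"
proof -
  define n where "n = (LEAST n. n > 0 \<and> (f ^^ n) x = x)"
  obtain m where "m > 0" "(f ^^ m) x = x"
    using funpow_periodic[OF assms] .
  then have n: "n > 0" "(f ^^ n) x = x"
    unfolding n_def by (metis (mono_tags, lifting) LeastI)+
  have "inj_on (\<lambda>k. (f ^^ k) x) {..<n}"
  proof (rule linorder_inj_onI')
    fix i j assume "i \<in> {..<n}" "j \<in> {..<n}" "i < j"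
    then have "0 < j - i" "j - i < n" by auto
    then have "(f ^^ (j - i)) x \<noteq> x"
      using not_less_Least n_def by blast
    then show "(f ^^ i) x \<noteq> (f ^^ j) x"
      using funpow_cancel[OF f x] \<open>i < j\<close> by force
  qed
  moreover have "orb f x = (\<lambda>k. (f ^^ k) x) ` {..<n}"
    using funpow_mod[OF n(2)] n(1) by (auto simp: orb_iff image_iff) (meson lessThan_iff mod_less_divisor)
  ultimately show ?thesis
    using n that by blast
qed

lemma orb_sym:
  assumes "bij_betw f D D" "finite D" "x \<in> D" "y \<in> orb f x"
  shows "x \<in> orb f y"
proof -
  obtain n where n: "(f ^^ n) x = x" "orb f x = (\<lambda>k. (f ^^ k) x) ` {..<n}"
    using orb_cycle[OF assms(1-3)] by blast
  then obtain k where "k < n" "y = (f ^^ k) x"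
    using assms(4) by auto
  then have "(f ^^ (n - k)) y = x"
    using n(1) \<open>k < n\<close> by (simp add: funpow_funpow)
  then show ?thesis
    by (metis funpow_in_orb)
qed

lemma orb_eq:
  assumes "bij_betw f D D" "finite D" "x \<in> D" "y \<in> orb f x"
  shows "orb f y = orb f x"
  using orb_subset_orb[OF assms(4)] orb_subset_orb[OF orb_sym[OF assms]] by blast

lemma card_orb_eq_3:
  assumes "bij_betw f D D" "finite D" "x \<in> D" "card (orb f x) = 3"
  shows "orb f x = {x, f x, f (f x)}" "f (f (f x)) = x" "distinct [x, f x, f (f x)]"
proof -
  obtain n where n: "(f ^^ n) x = x" "inj_on (\<lambda>k. (f ^^ k) x) {..<n}"
    "orb f x = (\<lambda>k. (f ^^ k) x) ` {..<n}"
    using orb_cycle[OF assms(1-3)] by blast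
  then have "n = 3"
    using assms(4) card_image by fastforce
  have three: "{..<3::nat} = {0, 1, 2}" by auto
  show "orb f x = {x, f x, f (f x)}"
    using n(3) unfolding \<open>n = 3\<close> three by (simp add: numeral_2_eq_2)
  show "f (f (f x)) = x"
    using n(1) unfolding \<open>n = 3\<close> by (simp add: numeral_3_eq_3)
  show "distinct [x, f x, f (f x)]"
    using n(2) unfolding \<open>n = 3\<close> three inj_on_def by (auto simp: numeral_2_eq_2 dest!: spec)
qed

section \<open>Linear independence in spaces of real functions\<close>

global_interpretation rfun: vector_space "\<lambda>(c::real) (f::'b \<Rightarrow> real) x. c * f x"
  by unfold_locales (auto simp: fun_eq_iff algebra_simps)

lemma sum_fun_apply: "(sum f A) x = (\<Sum>a\<in>A. f a x)"
  by (induction A rule: infinite_finite_induct) auto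

lemma independent_family_card_le:
  fixes X :: "'i \<Rightarrow> 'b \<Rightarrow> real"
  assumes "finite I" "finite T" and span: "\<And>i. i \<in> I \<Longrightarrow> X i \<in> rfun.span T"
    and indep: "\<And>c. (\<And>x. (\<Sum>i\<in>I. c i * X i x) = 0) \<Longrightarrow> \<forall>i\<in>I. c i = 0"
  shows "card I \<le> card T"
proof -
  have inj: "inj_on X I"
  proof (rule inj_onI, rule ccontr)
    fix i j assume ij: "i \<in> I" "j \<in> I" "X i = X j" "i \<noteq> j"
    define c :: "'i \<Rightarrow> real" where "c k = of_bool (k = i) - of_bool (k = j)" for k
    have "(\<Sum>k\<in>I. c k * X k x) = X i x - X j x" for x
      using ij \<open>finite I\<close> by (simp add: c_def left_diff_distrib sum_subtractf if_distrib cong: if_cong)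
    then have "c i = 0"
      using indep ij by simp
    then show False
      using ij by (simp add: c_def)
  qed
  have "rfun.independent (X ` I)"
  proof (rule rfun.independent_if_scalars_zero)
    fix f x assume zero: "(\<Sum>y\<in>X ` I. (\<lambda>d. f y * y d)) = 0" and x: "x \<in> X ` I"
    have "(\<Sum>i\<in>I. f (X i) * X i d) = 0" for d
      using fun_cong[OF zero, of d] by (simp add: sum_fun_apply sum.reindex[OF inj])
    then show "f x = 0"
      using indep[of "f \<circ> X"] x by auto
  qed (use \<open>finite I\<close> in simp)
  then have "card (X ` I) \<le> card T"
    using rfun.independent_span_bound[OF \<open>finite T\<close>] span by blast
  then show ?thesis
    using card_image[OF inj] by simp
qed

section \<open>Rotation systems and their faces\<close>

lemma connected_graph_induct:
  assumes "connected_graph V E" "u \<in> V" "v \<in> V" "P u" "\<And>x y. E x y \<Longrightarrow> P x \<Longrightarrow> P y"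
  shows "P v"
proof -
  have "E\<^sup>*\<^sup>* u v"
    using assms(1-3) by (simp add: connected_graph_def)
  then show ?thesis
    by (induction rule: rtranclp_induct) (use assms(4,5) in blast)+
qed

lemma mem_darts_iff: "(u, v) \<in> darts E \<longleftrightarrow> E u v"
  by (simp add: darts_def)

lemma face_map_Pair: "face_map \<sigma> (u, v) = \<sigma> (v, u)"
  by (simp add: face_map_def)

locale rotation_graph =
  fixes V :: "'a set" and E :: "'a \<Rightarrow> 'a \<Rightarrow> bool" and \<sigma> :: "'a \<times> 'a \<Rightarrow> 'a \<times> 'a"
  assumes simple: "simple_graph V E"
    and connected: "connected_graph V E"
    and rotation: "rotation_system E \<sigma>"
begin

lemma edge_vertices: "E u v \<Longrightarrow> u \<in> V \<and> v \<in> V"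
  using simple by (simp add: simple_graph_def)

lemma edge_sym: "E u v \<Longrightarrow> E v u"
  using simple by (simp add: simple_graph_def)

lemma edge_irrefl: "E u v \<Longrightarrow> u \<noteq> v"
  using simple by (auto simp: simple_graph_def)

lemma fst_dart_in_V: "d \<in> darts E \<Longrightarrow> fst d \<in> V"
  by (cases d) (simp add: mem_darts_iff edge_vertices)

lemma swap_in_darts: "d \<in> darts E \<Longrightarrow> prod.swap d \<in> darts E"
  by (cases d) (simp add: mem_darts_iff edge_sym)

lemma swap_dart_neq: "d \<in> darts E \<Longrightarrow> prod.swap d \<noteq> d"
  by (cases d) (auto simp: mem_darts_iff dest: edge_irrefl)

lemma finite_darts: "finite (darts E)"
proof -
  have "darts E \<subseteq> V \<times> V"
    by (auto simp: mem_darts_iff edge_vertices)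
  then show ?thesis
    using simple finite_subset by (auto simp: simple_graph_def)
qed

lemma bij_face_map: "bij_betw (face_map \<sigma>) (darts E) (darts E)"
proof -
  have "bij_betw prod.swap (darts E) (darts E)"
    by (rule bij_betw_byWitness[of _ prod.swap]) (auto simp: mem_darts_iff intro: edge_sym)
  moreover have "face_map \<sigma> = \<sigma> \<circ> prod.swap"
    by (auto simp: face_map_def fun_eq_iff)
  ultimately show ?thesis
    using bij_betw_trans rotation by (auto simp: rotation_system_def)
qed

lemma face_map_in_darts: "d \<in> darts E \<Longrightarrow> face_map \<sigma> d \<in> darts E"
  using bij_face_map by (auto simp: bij_betw_def)

lemma fst_face_map: "d \<in> darts E \<Longrightarrow> fst (face_map \<sigma> d) = snd d"
  using rotation swap_in_darts[of d] by (cases d) (auto simp: rotation_system_def face_map_Pair)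

lemma faces_eq_image: "faces E \<sigma> = orb (face_map \<sigma>) ` darts E"
  unfolding faces_def by blast

lemma finite_faces: "finite (faces E \<sigma>)"
  using finite_darts by (simp add: faces_eq_image)

lemma face_subset_darts: "g \<in> faces E \<sigma> \<Longrightarrow> g \<subseteq> darts E"
  using orb_subset[of "face_map \<sigma>" "darts E"] face_map_in_darts unfolding faces_eq_image by blast

lemma finite_face: "g \<in> faces E \<sigma> \<Longrightarrow> finite g"
  using face_subset_darts finite_darts finite_subset by blast

lemma mem_face_iff:
  assumes "g \<in> faces E \<sigma>" "d \<in> darts E"
  shows "d \<in> g \<longleftrightarrow> g = orb (face_map \<sigma>) d"
proof
  obtain d0 where "d0 \<in> darts E" "g = orb (face_map \<sigma>) d0"
    using assms(1) by (auto simp: faces_eq_image)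
  then show "d \<in> g \<Longrightarrow> g = orb (face_map \<sigma>) d"
    using orb_eq[OF bij_face_map finite_darts] by simp
qed (simp add: orb_self)

text \<open>A face is a closed walk: each of its darts starts where its predecessor ends.\<close>
lemma sum_face_fst_eq_snd:
  assumes g: "g \<in> faces E \<sigma>"
  shows "(\<Sum>d\<in>g. q (fst d)) = (\<Sum>d\<in>g. q (snd d))"
proof -
  obtain d0 where g_eq: "g = orb (face_map \<sigma>) d0"
    using g by (auto simp: faces_eq_image)
  have "face_map \<sigma> ` g \<subseteq> g"
    unfolding g_eq by (rule image_orb_subset)
  moreover have inj: "inj_on (face_map \<sigma>) g"
    using bij_face_map face_subset_darts[OF g] by (auto simp: bij_betw_def intro: inj_on_subset)
  ultimately have image_g: "face_map \<sigma> ` g = g"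
    using endo_inj_surj finite_face[OF g] by blast
  have "(\<Sum>d\<in>g. q (fst d)) = (\<Sum>d\<in>g. q (fst (face_map \<sigma> d)))"
    using sum.reindex[OF inj, of "\<lambda>d. q (fst d)"] unfolding image_g by simp
  also have "\<dots> = (\<Sum>d\<in>g. q (snd d))"
    using face_subset_darts[OF g] fst_face_map by (intro sum.cong) auto
  finally show ?thesis .
qed

lemma triangular_face:
  assumes g: "g \<in> faces E \<sigma>" and "card g = 3"
  obtains u v w where "g = {(u, v), (v, w), (w, u)}" "distinct [(u, v), (v, w), (w, u)]"
    "E u v" "E v w" "E w u"
proof -
  obtain d where d: "d \<in> darts E" "g = orb (face_map \<sigma>) d"
    using g by (auto simp: faces_eq_image)
  note tri = card_orb_eq_3[OF bij_face_map finite_darts d(1) \<open>card g = 3\<close>[unfolded d(2)]]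
  obtain u v where uv: "d = (u, v)"
    by (cases d)
  obtain w where w: "face_map \<sigma> d = (v, w)"
    using fst_face_map[OF d(1)] uv by (cases "face_map \<sigma> d") auto
  have d1: "face_map \<sigma> d \<in> darts E" and d2: "face_map \<sigma> (face_map \<sigma> d) \<in> darts E"
    using face_map_in_darts d(1) by blast+
  obtain x where x: "face_map \<sigma> (face_map \<sigma> d) = (w, x)"
    using fst_face_map[OF d1] w by (cases "face_map \<sigma> (face_map \<sigma> d)") auto
  have "x = u"
    using fst_face_map[OF d2] tri(2) x uv by simp
  show ?thesis
    by (rule that[of u v w]) (use tri(1,3) d d1 d2 uv w x \<open>x = u\<close> in \<open>simp_all add: mem_darts_iff\<close>)
qed

lemma closed_dart_set_eq_darts:
  assumes S: "S \<subseteq> darts E" "d0 \<in> S"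
    and swap_S: "\<And>d. d \<in> S \<Longrightarrow> prod.swap d \<in> S"
    and face_map_S: "\<And>d. d \<in> S \<Longrightarrow> face_map \<sigma> d \<in> S"
  shows "S = darts E"
proof -
  have rotate_S: "(\<sigma> ^^ n) d \<in> S" if "d \<in> S" for d n
  proof (induction n)
    case (Suc n)
    then show ?case
      using face_map_S[OF swap_S] by (simp add: face_map_def)
  qed (use that in simp)
  have star_S: "d' \<in> S" if dS: "d \<in> S" and d': "d' \<in> darts E" "fst d' = fst d" for d d'
  proof -
    have "d \<in> darts E"
      using dS S(1) by blast
    then have "d' \<in> orb \<sigma> d"
      using rotation d' by (simp add: rotation_system_def)
    then obtain n where "d' = (\<sigma> ^^ n) d"
      by (auto simp: orb_iff)
    then show ?thesis
      using rotate_S[OF dS] by simp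
  qed
  have "\<forall>d\<in>darts E. fst d = v \<longrightarrow> d \<in> S" if "v \<in> V" for v
  proof (rule connected_graph_induct[OF connected _ that])
    show "fst d0 \<in> V"
      using S fst_dart_in_V by blast
    show "\<forall>d\<in>darts E. fst d = fst d0 \<longrightarrow> d \<in> S"
      using star_S S(2) by blast
  next
    fix x y assume "E x y" "\<forall>d\<in>darts E. fst d = x \<longrightarrow> d \<in> S"
    then have "(y, x) \<in> S"
      using swap_S[of "(x, y)"] by (simp add: mem_darts_iff)
    then show "\<forall>d\<in>darts E. fst d = y \<longrightarrow> d \<in> S"
      using star_S by fastforce
  qed
  then show ?thesis
    using S(1) fst_dart_in_V by blast
qed

text \<open>The dual graph is connected.\<close>
lemma faces_induct:
  assumes f0: "f0 \<in> faces E \<sigma>" and "Q f0"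
    and cross: "\<And>u v. E u v \<Longrightarrow> Q (orb (face_map \<sigma>) (u, v)) \<Longrightarrow> Q (orb (face_map \<sigma>) (v, u))"
    and g: "g \<in> faces E \<sigma>"
  shows "Q g"
proof -
  define S where "S = {d \<in> darts E. Q (orb (face_map \<sigma>) d)}"
  obtain d0 where d0: "d0 \<in> darts E" "f0 = orb (face_map \<sigma>) d0"
    using f0 by (auto simp: faces_eq_image)
  have "S = darts E"
  proof (rule closed_dart_set_eq_darts)
    show "S \<subseteq> darts E" "d0 \<in> S"
      using d0 \<open>Q f0\<close> by (auto simp: S_def)
    show "prod.swap d \<in> S" if "d \<in> S" for d
      using that cross swap_in_darts by (cases d) (auto simp: S_def mem_darts_iff)
    show "face_map \<sigma> d \<in> S" if "d \<in> S" for d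
    proof -
      have "d \<in> darts E"
        using that by (simp add: S_def)
      then have "orb (face_map \<sigma>) (face_map \<sigma> d) = orb (face_map \<sigma>) d"
        using orb_eq[OF bij_face_map finite_darts _ orb_step] by blast
      then show ?thesis
        using that face_map_in_darts by (auto simp: S_def)
    qed
  qed
  moreover obtain d where "d \<in> darts E" "g = orb (face_map \<sigma>) d"
    using g by (auto simp: faces_eq_image)
  ultimately show ?thesis
    unfolding S_def by blast
qed

end

section \<open>Real 1-forms on a plane graph\<close>

definition dart_form :: "'a \<times> 'a \<Rightarrow> 'a \<times> 'a \<Rightarrow> real" where
  "dart_form d x = of_bool (x = d) - of_bool (prod.swap x = d)"

context rotation_graph
begin

definition one_form :: "('a \<times> 'a \<Rightarrow> real) \<Rightarrow> bool" where
  "one_form y \<longleftrightarrow> (\<forall>d. d \<notin> darts E \<longrightarrow> y d = 0) \<and> (\<forall>d\<in>darts E. y (prod.swap d) = - y d)"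

definition grad :: "('a \<Rightarrow> real) \<Rightarrow> 'a \<times> 'a \<Rightarrow> real" where
  "grad q d = (if d \<in> darts E then q (snd d) - q (fst d) else 0)"

lemma one_form_diff: "one_form y \<Longrightarrow> one_form z \<Longrightarrow> one_form (y - z)"
  by (simp add: one_form_def)

lemma one_form_dart_form:
  assumes d: "d \<in> darts E"
  shows "one_form (dart_form d)"
proof -
  have "dart_form d x = 0" if "x \<notin> darts E" for x
  proof -
    have "x \<noteq> d" "prod.swap x \<noteq> d"
      using that d swap_in_darts[of "prod.swap x"] by auto
    then show ?thesis
      by (simp add: dart_form_def)
  qed
  moreover have "dart_form d (prod.swap x) = - dart_form d x" for x
    by (simp add: dart_form_def)
  ultimately show ?thesis
    by (simp add: one_form_def)
qed

lemma one_form_grad: "one_form (grad q)"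
  using swap_in_darts by (auto simp: one_form_def grad_def)

lemma orientation_exists:
  obtains A where "A \<subseteq> darts E" "\<And>d. d \<in> darts E \<Longrightarrow> d \<in> A \<longleftrightarrow> prod.swap d \<notin> A"
    "card (darts E) = 2 * card A"
proof -
  obtain idx :: "'a \<Rightarrow> nat" where idx: "inj_on idx V"
    using finite_imp_inj_to_nat_seg simple by (metis simple_graph_def)
  define A where "A = {d \<in> darts E. idx (fst d) < idx (snd d)}"
  have A: "d \<in> A \<longleftrightarrow> prod.swap d \<notin> A" if d: "d \<in> darts E" for d
  proof -
    have "idx (fst d) \<noteq> idx (snd d)"
      using swap_dart_neq[OF d] fst_dart_in_V[OF d] fst_dart_in_V[OF swap_in_darts[OF d]] idx
      by (cases d) (auto dest: inj_onD)
    then show ?thesis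
      using d swap_in_darts[OF d] by (auto simp: A_def)
  qed
  have "darts E = A \<union> prod.swap ` A"
  proof
    show "darts E \<subseteq> A \<union> prod.swap ` A"
      using A by (metis UnI1 UnI2 image_eqI subsetI swap_swap)
    show "A \<union> prod.swap ` A \<subseteq> darts E"
      unfolding A_def using swap_in_darts by blast
  qed
  moreover have "A \<inter> prod.swap ` A = {}"
    by (auto simp: A_def)
  moreover have "finite A"
    using finite_darts by (simp add: A_def)
  ultimately have "card (darts E) = 2 * card A"
    by (simp add: card_Un_disjoint card_image)
  moreover have "A \<subseteq> darts E"
    by (auto simp: A_def)
  ultimately show ?thesis
    using that A by blast
qed

lemma one_form_in_span:
  assumes A: "A \<subseteq> darts E" "\<And>d. d \<in> darts E \<Longrightarrow> d \<in> A \<longleftrightarrow> prod.swap d \<notin> A"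
    and y: "one_form y"
  shows "y \<in> rfun.span (dart_form ` A)"
proof -
  have finite_A: "finite A"
    using A(1) finite_darts finite_subset by blast
  have expand: "y x = (\<Sum>d\<in>A. y d * dart_form d x)" for x
  proof (cases "x \<in> darts E")
    case True
    have "(\<Sum>d\<in>A. y d * dart_form d x)
        = (if x \<in> A then y x else 0) - (if prod.swap x \<in> A then y (prod.swap x) else 0)"
      using finite_A by (simp add: dart_form_def right_diff_distrib sum_subtractf)
    also have "\<dots> = y x"
      using A(2)[OF True] y True unfolding one_form_def by (cases "x \<in> A") auto
    finally show ?thesis
      by simp
  next
    case False
    then have "dart_form d x = 0" if "d \<in> A" for d
      using that A(1) one_form_dart_form[of d] False unfolding one_form_def by blast
    moreover have "y x = 0"
      using y False unfolding one_form_def by blast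
    ultimately show ?thesis
      by simp
  qed
  have "y = (\<Sum>d\<in>A. (\<lambda>x. y d * dart_form d x))"
    by (rule ext) (subst sum_fun_apply, rule expand)
  also have "\<dots> \<in> rfun.span (dart_form ` A)"
  proof (rule rfun.span_sum)
    fix d assume "d \<in> A"
    then have "dart_form d \<in> rfun.span (dart_form ` A)"
      by (simp add: rfun.span_base)
    then show "(\<lambda>x. y d * dart_form d x) \<in> rfun.span (dart_form ` A)"
      by (rule rfun.span_scale)
  qed
  finally show ?thesis .
qed

text \<open>The 1-forms are spanned by the dart forms of one dart per edge.\<close>
lemma independent_one_forms_card_le:
  assumes "finite I" "\<And>i. i \<in> I \<Longrightarrow> one_form (X i)"
    and "\<And>c. (\<And>x. (\<Sum>i\<in>I. c i * X i x) = 0) \<Longrightarrow> \<forall>i\<in>I. c i = 0"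
  shows "card I \<le> card (darts E) div 2"
proof -
  obtain A where A: "A \<subseteq> darts E" "\<And>d. d \<in> darts E \<Longrightarrow> d \<in> A \<longleftrightarrow> prod.swap d \<notin> A"
    and card_A: "card (darts E) = 2 * card A"
    using orientation_exists by blast
  have "finite A"
    using A(1) finite_darts finite_subset by blast
  then have "card I \<le> card (dart_form ` A)"
    using independent_family_card_le[OF \<open>finite I\<close>] one_form_in_span[OF A] assms(2,3) by blast
  also have "\<dots> \<le> card A"
    using \<open>finite A\<close> by (rule card_image_le)
  finally show ?thesis
    using card_A by simp
qed

lemma sum_face_grad:
  assumes g: "g \<in> faces E \<sigma>"
  shows "sum (grad q) g = 0"
proof -
  have "sum (grad q) g = (\<Sum>d\<in>g. q (snd d) - q (fst d))"
    using face_subset_darts[OF g] by (intro sum.cong) (auto simp: grad_def)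
  then show ?thesis
    using sum_face_fst_eq_snd[OF g, of q] by (simp add: sum_subtractf)
qed

lemma sum_face_dart_form:
  assumes g: "g \<in> faces E \<sigma>" and d: "d \<in> darts E"
  shows "sum (dart_form d) g
    = of_bool (g = orb (face_map \<sigma>) d) - of_bool (g = orb (face_map \<sigma>) (prod.swap d))"
proof -
  have "prod.swap x = d \<longleftrightarrow> x = prod.swap d" for x
    by auto
  then have "sum (dart_form d) g = of_bool (d \<in> g) - of_bool (prod.swap d \<in> g)"
    using finite_face[OF g] by (simp add: dart_form_def sum_subtractf)
  then show ?thesis
    using mem_face_iff[OF g] d swap_in_darts[OF d] by simp
qed

text \<open>The witness is the sum of the dart forms along a path from f0 to f in the dual graph.\<close>
lemma dual_path_form:
  assumes f0: "f0 \<in> faces E \<sigma>" and f: "f \<in> faces E \<sigma>"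
  shows "\<exists>w. one_form w \<and> (\<forall>g\<in>faces E \<sigma>. sum w g = of_bool (g = f) - of_bool (g = f0))"
proof (rule faces_induct[OF f0 _ _ f])
  show "\<exists>w. one_form w \<and> (\<forall>g\<in>faces E \<sigma>. sum w g = of_bool (g = f0) - of_bool (g = f0))"
    by (rule exI[of _ 0]) (simp add: one_form_def)
next
  fix u v assume "E u v"
    and "\<exists>w. one_form w \<and> (\<forall>g\<in>faces E \<sigma>.
            sum w g = of_bool (g = orb (face_map \<sigma>) (u, v)) - of_bool (g = f0))"
  then obtain w where d: "(u, v) \<in> darts E" and w: "one_form w"
    "\<forall>g\<in>faces E \<sigma>. sum w g = of_bool (g = orb (face_map \<sigma>) (u, v)) - of_bool (g = f0)"
    by (auto simp: mem_darts_iff)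
  show "\<exists>w. one_form w \<and> (\<forall>g\<in>faces E \<sigma>.
            sum w g = of_bool (g = orb (face_map \<sigma>) (v, u)) - of_bool (g = f0))"
    using one_form_diff[OF w(1) one_form_dart_form[OF d]] w(2) sum_face_dart_form[OF _ d]
    by (intro exI[of _ "w - dart_form (u, v)"]) (simp add: sum_subtractf)
qed

lemma dual_path_forms:
  assumes f1: "f1 \<in> faces E \<sigma>"
  obtains w where "\<And>f. f \<in> faces E \<sigma> \<Longrightarrow> one_form (w f)"
    "\<And>f g. f \<in> faces E \<sigma> \<Longrightarrow> g \<in> faces E \<sigma> \<Longrightarrow> sum (w f) g = of_bool (g = f) - of_bool (g = f1)"
proof -
  obtain w where "\<forall>f\<in>faces E \<sigma>. one_form (w f) \<and>
      (\<forall>g\<in>faces E \<sigma>. sum (w f) g = of_bool (g = f) - of_bool (g = f1))"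
    using bchoice[of "faces E \<sigma>" "\<lambda>f w. one_form w \<and>
        (\<forall>g\<in>faces E \<sigma>. sum w g = of_bool (g = f) - of_bool (g = f1))"] dual_path_form[OF f1]
    by blast
  then show ?thesis
    using that by blast
qed

lemma grad_eq_0_imp_constant:
  assumes "grad q = 0" "u \<in> V" "v \<in> V"
  shows "q u = q v"
proof (rule connected_graph_induct[OF connected assms(2,3), where P = "\<lambda>v. q u = q v"])
  fix x y assume "E x y" "q u = q x"
  then show "q u = q y"
    using fun_cong[OF assms(1), of "(x, y)"] by (simp add: grad_def mem_darts_iff)
qed simp

lemma combination_with_grad_eq_0:
  assumes not_exact: "\<nexists>q. h = grad q" and zero: "\<And>x. a * h x + grad p x = 0"
  shows "a = 0" "\<And>u v. u \<in> V \<Longrightarrow> v \<in> V \<Longrightarrow> p u = p v"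
proof -
  show a: "a = 0"
  proof (rule ccontr)
    assume "a \<noteq> 0"
    then have "h x = grad (\<lambda>u. - p u / a) x" for x
      using zero[of x] unfolding grad_def by (simp add: field_simps split: if_splits)
    then have "h = grad (\<lambda>u. - p u / a)" ..
    then show False
      using not_exact by blast
  qed
  have "grad p = 0"
    using zero by (simp add: a fun_eq_iff)
  then show "\<And>u v. u \<in> V \<Longrightarrow> v \<in> V \<Longrightarrow> p u = p v"
    by (rule grad_eq_0_imp_constant)
qed

lemma sum_face_scale_plus_grad:
  assumes "g \<in> faces E \<sigma>"
  shows "(\<Sum>x\<in>g. a * h x + grad q x) = a * sum h g"
  using sum_face_grad[OF assms] by (simp add: sum.distrib sum_distrib_left)

lemma dual_coefficient_eq_0:
  fixes y :: "'a \<times> 'a \<Rightarrow> real"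
  assumes closed: "\<forall>g\<in>faces E \<sigma>. g \<noteq> f1 \<longrightarrow> sum y g = 0"
    and w: "\<And>f g. f \<in> faces E \<sigma> \<Longrightarrow> g \<in> faces E \<sigma> \<Longrightarrow>
      sum (w f) g = of_bool (g = f) - of_bool (g = f1)"
    and zero: "\<And>x. y x + (\<Sum>f\<in>faces E \<sigma> - {f1}. b f * w f x) = 0"
    and f: "f \<in> faces E \<sigma>" "f \<noteq> f1"
  shows "b f = 0"
proof -
  have swap: "(\<Sum>x\<in>f. \<Sum>f'\<in>faces E \<sigma> - {f1}. b f' * w f' x)
      = (\<Sum>f'\<in>faces E \<sigma> - {f1}. b f' * sum (w f') f)"
    by (subst sum.swap) (simp only: sum_distrib_left)
  have "0 = (\<Sum>x\<in>f. y x + (\<Sum>f'\<in>faces E \<sigma> - {f1}. b f' * w f' x))"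
    using zero by simp
  also have "\<dots> = sum y f + (\<Sum>f'\<in>faces E \<sigma> - {f1}. b f' * sum (w f') f)"
    by (simp add: sum.distrib swap)
  also have "\<dots> = (\<Sum>f'\<in>faces E \<sigma> - {f1}. b f' * of_bool (f = f'))"
    using closed f w by simp
  also have "\<dots> = b f"
    using f finite_faces by simp
  finally show ?thesis
    by simp
qed

lemma sum_grad_indicator:
  assumes "finite S"
  shows "(\<Sum>v\<in>S. c v * grad (\<lambda>u. of_bool (u = v)) x) = grad (\<lambda>u. if u \<in> S then c u else 0) x"
  using assms by (simp add: grad_def right_diff_distrib sum_subtractf)

lemma vertex_face_forms_independent:
  assumes v0: "v0 \<in> V" and not_exact: "\<nexists>q. h = grad q"
    and closed: "\<forall>g\<in>faces E \<sigma>. g \<noteq> f1 \<longrightarrow> sum h g = 0"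
    and w: "\<And>f g. f \<in> faces E \<sigma> \<Longrightarrow> g \<in> faces E \<sigma> \<Longrightarrow>
      sum (w f) g = of_bool (g = f) - of_bool (g = f1)"
    and zero: "\<And>x. a0 * h x + (\<Sum>v\<in>V - {v0}. a v * grad (\<lambda>u. of_bool (u = v)) x)
      + (\<Sum>f\<in>faces E \<sigma> - {f1}. b f * w f x) = 0"
  shows "a0 = 0" "\<And>v. v \<in> V - {v0} \<Longrightarrow> a v = 0" "\<And>f. f \<in> faces E \<sigma> - {f1} \<Longrightarrow> b f = 0"
proof -
  have "finite V"
    using simple by (simp add: simple_graph_def)
  define p where "p = (\<lambda>u. if u \<in> V - {v0} then a u else 0)"
  have sum_eq_0: "(a0 * h x + grad p x) + (\<Sum>f\<in>faces E \<sigma> - {f1}. b f * w f x) = 0" for x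
    using zero[of x] \<open>finite V\<close> by (simp add: sum_grad_indicator p_def)
  show faces_0: "b f = 0" if "f \<in> faces E \<sigma> - {f1}" for f
    using that closed sum_face_scale_plus_grad by (intro dual_coefficient_eq_0[OF _ w sum_eq_0]) auto
  then have "a0 * h x + grad p x = 0" for x
    using sum_eq_0[of x] by simp
  note vertices = combination_with_grad_eq_0[OF not_exact this]
  show "a0 = 0"
    by (rule vertices(1))
  show "a v = 0" if "v \<in> V - {v0}" for v
    using vertices(2)[of v v0] that v0 by (simp add: p_def)
qed

lemma card_vertices_faces_le_if_not_exact:
  assumes f1: "f1 \<in> faces E \<sigma>" and h: "one_form h" and not_exact: "\<nexists>q. h = grad q"
    and closed: "\<forall>g\<in>faces E \<sigma>. g \<noteq> f1 \<longrightarrow> sum h g = 0"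
  shows "card V + card (faces E \<sigma>) \<le> card (darts E) div 2 + 1"
proof -
  obtain v0 where v0: "v0 \<in> V"
    using connected by (auto simp: connected_graph_def)
  obtain w where w: "\<And>f. f \<in> faces E \<sigma> \<Longrightarrow> one_form (w f)"
    "\<And>f g. f \<in> faces E \<sigma> \<Longrightarrow> g \<in> faces E \<sigma> \<Longrightarrow> sum (w f) g = of_bool (g = f) - of_bool (g = f1)"
    using dual_path_forms[OF f1] by blast
  have finite_V: "finite V"
    using simple by (simp add: simple_graph_def)
  define I where "I = V <+> (faces E \<sigma> - {f1})"
  \<comment> \<open>the slot of v0 is taken by h\<close>
  define X where "X = case_sum (\<lambda>v. if v = v0 then h else grad (\<lambda>u. of_bool (u = v))) w"
  have "card I \<le> card (darts E) div 2"
  proof (rule independent_one_forms_card_le)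
    show "finite I"
      using finite_V finite_faces by (simp add: I_def)
    show "one_form (X i)" if "i \<in> I" for i
      using that h w(1) one_form_grad by (auto simp: I_def X_def)
  next
    fix c assume zero: "\<And>x. (\<Sum>i\<in>I. c i * X i x) = 0"
    have "(\<Sum>i\<in>I. c i * X i x) = c (Inl v0) * h x
        + (\<Sum>v\<in>V - {v0}. c (Inl v) * grad (\<lambda>u. of_bool (u = v)) x)
        + (\<Sum>f\<in>faces E \<sigma> - {f1}. c (Inr f) * w f x)" for x
    proof -
      have "(\<Sum>v\<in>V - {v0}. c (Inl v) * X (Inl v) x)
          = (\<Sum>v\<in>V - {v0}. c (Inl v) * grad (\<lambda>u. of_bool (u = v)) x)"
        by (intro sum.cong) (auto simp: X_def)
      then show ?thesis
        using v0 finite_V finite_faces by (simp add: I_def sum.Plus X_def sum.remove)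
    qed
    then have "c (Inl v0) * h x + (\<Sum>v\<in>V - {v0}. c (Inl v) * grad (\<lambda>u. of_bool (u = v)) x)
        + (\<Sum>f\<in>faces E \<sigma> - {f1}. c (Inr f) * w f x) = 0" for x
      using zero by simp
    note independent = vertex_face_forms_independent[OF v0 not_exact closed w(2) this]
    show "\<forall>i\<in>I. c i = 0"
      using independent by (auto simp: I_def)
  qed
  moreover have "card I = card V + card (faces E \<sigma>) - 1"
    using finite_V finite_faces f1 card_gt_0_iff[of "faces E \<sigma>"]
    by (auto simp: I_def card_Plus card_Diff_singleton)
  ultimately show ?thesis
    by linarith
qed

lemma closed_one_form_exact:
  assumes plane: "plane_map V E \<sigma>" and h: "one_form h"
    and closed: "\<forall>g\<in>faces E \<sigma>. g \<noteq> f0 \<longrightarrow> sum h g = 0"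
  shows "\<exists>q. h = grad q"
proof (cases "darts E = {}")
  case True
  then have "h = grad (\<lambda>_. 0)"
    using h unfolding one_form_def grad_def by auto
  then show ?thesis
    by blast
next
  case False
  then obtain d where d: "d \<in> darts E"
    by blast
  obtain f1 where f1: "f1 \<in> faces E \<sigma>" and closed1: "\<forall>g\<in>faces E \<sigma>. g \<noteq> f1 \<longrightarrow> sum h g = 0"
  proof (cases "f0 \<in> faces E \<sigma>")
    case True
    then show ?thesis
      using that closed by blast
  next
    case False
    moreover have "orb (face_map \<sigma>) d \<in> faces E \<sigma>"
      using d by (simp add: faces_eq_image)
    ultimately show ?thesis
      using that closed by metis
  qed
  have euler: "int (card V) - int (card (darts E)) div 2 + int (card (faces E \<sigma>)) = 2"
    using plane False by (simp add: plane_map_def)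
  show ?thesis
  proof (rule ccontr)
    assume "\<nexists>q. h = grad q"
    then have "card V + card (faces E \<sigma>) \<le> card (darts E) div 2 + 1"
      using card_vertices_faces_le_if_not_exact[OF f1 h _ closed1] by blast
    then show False
      using euler by (simp add: zdiv_int[symmetric])
  qed
qed

lemma integer_potential_of_real_potential:
  fixes k :: "'a \<Rightarrow> 'a \<Rightarrow> int"
  assumes edge: "\<And>u v. E u v \<Longrightarrow> real_of_int (k u v) = q v - q u"
  obtains Q :: "'a \<Rightarrow> int" where "\<And>u v. E u v \<Longrightarrow> k u v = Q v - Q u"
proof -
  obtain v0 where v0: "v0 \<in> V"
    using connected by (auto simp: connected_graph_def)
  have integral: "q v - q v0 \<in> \<int>" if "v \<in> V" for v
  proof (rule connected_graph_induct[OF connected v0 that])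
    fix x y assume "E x y" "q x - q v0 \<in> \<int>"
    then have "q x - q v0 + real_of_int (k x y) \<in> \<int>"
      by simp
    then show "q y - q v0 \<in> \<int>"
      using edge[OF \<open>E x y\<close>] by simp
  qed simp
  show ?thesis
  proof (rule that)
    fix u v assume "E u v"
    then have "q u - q v0 = of_int \<lfloor>q u - q v0\<rfloor>" "q v - q v0 = of_int \<lfloor>q v - q v0\<rfloor>"
      using integral edge_vertices by (metis Ints_cases floor_of_int)+
    then show "k u v = \<lfloor>q v - q v0\<rfloor> - \<lfloor>q u - q v0\<rfloor>"
      using edge[OF \<open>E u v\<close>] by linarith
  qed
qed

lemma integer_potential:
  fixes k :: "'a \<Rightarrow> 'a \<Rightarrow> int"
  assumes plane: "plane_map V E \<sigma>" and triangles: "\<forall>g\<in>faces E \<sigma>. g \<noteq> f0 \<longrightarrow> card g = 3"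
    and antisym: "\<And>u v. E u v \<Longrightarrow> k v u = - k u v"
    and cocycle: "\<And>u v w. E u v \<Longrightarrow> E v w \<Longrightarrow> E w u \<Longrightarrow> k u v + k v w + k w u = 0"
  obtains Q :: "'a \<Rightarrow> int" where "\<And>u v. E u v \<Longrightarrow> k u v = Q v - Q u"
proof -
  define h where "h d = (if d \<in> darts E then real_of_int (k (fst d) (snd d)) else 0)" for d
  have "one_form h"
    unfolding one_form_def
  proof (intro conjI allI impI ballI)
    fix d assume d: "d \<in> darts E"
    obtain u v where "d = (u, v)"
      by (cases d)
    then show "h (prod.swap d) = - h d"
      using d antisym[of u v] edge_sym[of u v] by (simp add: h_def mem_darts_iff)
  qed (simp add: h_def)
  moreover have "\<forall>g\<in>faces E \<sigma>. g \<noteq> f0 \<longrightarrow> sum h g = 0"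
  proof (intro ballI impI)
    fix g assume "g \<in> faces E \<sigma>" "g \<noteq> f0"
    then obtain u v w where "g = {(u, v), (v, w), (w, u)}" "distinct [(u, v), (v, w), (w, u)]"
      "E u v" "E v w" "E w u"
      using triangular_face triangles by metis
    then show "sum h g = 0"
      using cocycle[of u v w] by (simp add: h_def mem_darts_iff flip: of_int_add)
  qed
  ultimately obtain q where q: "h = grad q"
    using closed_one_form_exact[OF plane] by blast
  have "real_of_int (k u v) = q v - q u" if "E u v" for u v
    using fun_cong[OF q, of "(u, v)"] that by (simp add: h_def grad_def mem_darts_iff)
  then show ?thesis
    using that integer_potential_of_real_potential by blast
qed

lemma lattice_potential:
  fixes k :: "'a \<Rightarrow> 'a \<Rightarrow> int \<times> int"
  assumes plane: "plane_map V E \<sigma>" and triangles: "\<forall>g\<in>faces E \<sigma>. g \<noteq> f0 \<longrightarrow> card g = 3"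
    and antisym: "\<And>u v. E u v \<Longrightarrow> k v u = - k u v"
    and cocycle: "\<And>u v w. E u v \<Longrightarrow> E v w \<Longrightarrow> E w u \<Longrightarrow> k u v + k v w + k w u = 0"
  obtains P :: "'a \<Rightarrow> int \<times> int" where "\<And>u v. E u v \<Longrightarrow> k u v = P v - P u"
proof -
  obtain Q1 where Q1: "\<And>u v. E u v \<Longrightarrow> fst (k u v) = Q1 v - Q1 u"
    using integer_potential[OF plane triangles, of "\<lambda>u v. fst (k u v)"] antisym cocycle
    by (metis fst_add fst_uminus fst_zero)
  obtain Q2 where Q2: "\<And>u v. E u v \<Longrightarrow> snd (k u v) = Q2 v - Q2 u"
    using integer_potential[OF plane triangles, of "\<lambda>u v. snd (k u v)"] antisym cocycle
    by (metis snd_add snd_uminus snd_zero)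
  show ?thesis
    using that[of "\<lambda>v. (Q1 v, Q2 v)"] Q1 Q2 by (simp add: prod_eq_iff)
qed

end

section \<open>Unit steps of the triangular grid\<close>

definition unit_steps :: "(int \<times> int) set" where
  "unit_steps = {(1, 0), (-1, 0), (0, 1), (0, -1), (1, 1), (-1, -1)}"

lemma T_hue_add: "T_hue (p + q) = T_hue p + T_hue q"
  by (simp add: T_hue_def)

lemma T_color_add: "T_color (p + q) = T_color p + T_color q"
  by (simp add: T_color_def)

lemma T_hue_uminus: "T_hue (- p) = - T_hue p"
  by (simp add: T_hue_def)

lemma T_color_uminus: "T_color (- p) = - T_color p"
  by (simp add: T_color_def)

lemma T_adj_iff: "T_adj p q \<longleftrightarrow> q - p \<in> unit_steps"
  by (simp add: T_adj_def unit_steps_def minus_prod_def)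

lemma unit_steps_uminus: "s \<in> unit_steps \<Longrightarrow> - s \<in> unit_steps"
  by (auto simp: unit_steps_def)

lemma unit_step_unique:
  assumes "s \<in> unit_steps" "t \<in> unit_steps" "T_hue s = T_hue t" "T_color s = T_color t"
  shows "s = t"
  using assms by (auto simp: unit_steps_def T_hue_def T_color_def)

lemma unit_step_add:
  assumes "s \<in> unit_steps" "t \<in> unit_steps" "T_hue (s + t) \<noteq> 0" "T_color (s + t) \<noteq> 0"
  shows "s + t \<in> unit_steps"
  using assms by (auto simp: unit_steps_def T_hue_def T_color_def zero_prod_def)

lemma exhaust_3: "(a::3) = 0 \<or> a = 1 \<or> a = -1"
proof (cases a)
  case (of_int z)
  then have "z = 0 \<or> z = 1 \<or> z = 2" by auto
  then show ?thesis using of_int by auto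
qed

lemma exhaust_2: "(b::2) = 0 \<or> b = 1"
proof (cases b)
  case (of_int z)
  then have "z = 0 \<or> z = 1" by auto
  then show ?thesis using of_int by auto
qed

lemma unit_step_exists:
  assumes "a \<noteq> 0" "c \<noteq> 0"
  shows "\<exists>s\<in>unit_steps. T_hue s = a \<and> T_color s = c"
proof -
  obtain c1 c2 where c: "c = (c1, c2)" by (cases c)
  show ?thesis
    using exhaust_3[of a] exhaust_2[of c1] exhaust_2[of c2] assms
    unfolding c unit_steps_def by (auto simp: T_hue_def T_color_def zero_prod_def)
qed

lemma T_hue_color_surj: "\<exists>p. T_hue p = a \<and> T_color p = c"
proof -
  obtain i where i: "a = of_int i" "i \<in> {0, 1, 2}"
  proof (cases a)
    case (of_int z)
    then have "z \<in> {0, 1, 2}"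
      by auto
    then show ?thesis
      using that of_int by blast
  qed
  obtain j k where jk: "c = (of_int j, of_int k)" "j \<in> {0, 1}" "k \<in> {0, 1}"
  proof (cases c)
    case (Pair c1 c2)
    show ?thesis
    proof (cases c1; cases c2)
      fix z1 z2 assume "c1 = of_int z1" "0 \<le> z1" "z1 < int CARD(2)" "c2 = of_int z2" "0 \<le> z2" "z2 < int CARD(2)"
      then have "z1 \<in> {0, 1}" "z2 \<in> {0, 1}"
        by auto
      then show ?thesis
        using that \<open>c1 = of_int z1\<close> \<open>c2 = of_int z2\<close> Pair by blast
    qed
  qed
  \<comment> \<open>the first coordinate is j mod 2 and i - k mod 3\<close>
  have "T_hue (3 * j + 4 * (i - k), k) = a \<and> T_color (3 * j + 4 * (i - k), k) = c"
    using i jk by (auto simp: T_hue_def T_color_def)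
  then show ?thesis ..
qed

text \<open>By unit_step_exists and unit_step_unique, the unit steps realize each pair of a nonzero
  hue difference and a nonzero color difference exactly once; for other pairs step_of is
  unspecified.\<close>
definition step_of :: "3 \<Rightarrow> 2 \<times> 2 \<Rightarrow> int \<times> int" where
  "step_of a c = (THE s. s \<in> unit_steps \<and> T_hue s = a \<and> T_color s = c)"

lemma step_of_eqI:
  assumes "s \<in> unit_steps" "T_hue s = a" "T_color s = c"
  shows "step_of a c = s"
  unfolding step_of_def
proof (rule the_equality)
  fix t assume "t \<in> unit_steps \<and> T_hue t = a \<and> T_color t = c"
  then show "t = s"
    using assms unit_step_unique[of t s] by simp
qed (use assms in simp)

lemma step_of:
  assumes "a \<noteq> 0" "c \<noteq> 0"
  shows "step_of a c \<in> unit_steps" "T_hue (step_of a c) = a" "T_color (step_of a c) = c"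
proof -
  obtain s where s: "s \<in> unit_steps" "T_hue s = a" "T_color s = c"
    using unit_step_exists[OF assms] by blast
  then have "step_of a c = s"
    by (rule step_of_eqI)
  then show "step_of a c \<in> unit_steps" "T_hue (step_of a c) = a" "T_color (step_of a c) = c"
    using s by simp_all
qed

lemma step_of_uminus:
  assumes "a \<noteq> 0" "c \<noteq> 0"
  shows "step_of (- a) (- c) = - step_of a c"
  using step_of[OF assms] by (intro step_of_eqI) (simp_all add: unit_steps_uminus T_hue_uminus T_color_uminus)

lemma step_of_add:
  assumes "a \<noteq> 0" "c \<noteq> 0" "b \<noteq> 0" "d \<noteq> 0" "a + b \<noteq> 0" "c + d \<noteq> 0"
  shows "step_of a c + step_of b d = step_of (a + b) (c + d)"
  using step_of[OF assms(1,2)] step_of[OF assms(3,4)] assms(5,6)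
  by (intro step_of_eqI[symmetric] unit_step_add) (simp_all add: T_hue_add T_color_add)

lemma dappled_hom_to_T_if_steps:
  assumes "connected_graph V E" "v0 \<in> V" "T_hue (F v0) = \<psi> v0" "T_color (F v0) = \<phi> v0"
    and proper: "\<And>u v. E u v \<Longrightarrow> \<psi> v - \<psi> u \<noteq> 0" "\<And>u v. E u v \<Longrightarrow> \<phi> v - \<phi> u \<noteq> 0"
    and steps: "\<And>u v. E u v \<Longrightarrow> F v - F u = step_of (\<psi> v - \<psi> u) (\<phi> v - \<phi> u)"
  shows "dappled_hom_to_T V E \<psi> \<phi> F"
proof -
  have step: "F v - F u \<in> unit_steps" "T_hue (F v - F u) = \<psi> v - \<psi> u"
    "T_color (F v - F u) = \<phi> v - \<phi> u" if "E u v" for u v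
    using step_of[OF proper[OF that]] steps[OF that] by simp_all
  have "T_hue (F v) = \<psi> v \<and> T_color (F v) = \<phi> v" if "v \<in> V" for v
  proof (rule connected_graph_induct[OF assms(1,2) that])
    show "T_hue (F v0) = \<psi> v0 \<and> T_color (F v0) = \<phi> v0"
      using assms(3,4) by simp
  next
    fix x y assume "E x y" "T_hue (F x) = \<psi> x \<and> T_color (F x) = \<phi> x"
    moreover have "F y = F x + (F y - F x)"
      by simp
    ultimately show "T_hue (F y) = \<psi> y \<and> T_color (F y) = \<phi> y"
      using step(2,3)[OF \<open>E x y\<close>] by (metis T_hue_add T_color_add add_diff_cancel_left' diff_add_cancel)
  qed
  moreover have "T_adj (F u) (F v)" if "E u v" for u v
    using step(1)[OF that] by (simp add: T_adj_iff)
  ultimately show ?thesis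
    by (simp add: dappled_hom_to_T_def)
qed

theorem theorem7:
  fixes V :: "'a set" and E :: "'a \<Rightarrow> 'a \<Rightarrow> bool"
    and \<psi> :: "'a \<Rightarrow> 3" and \<phi> :: "'a \<Rightarrow> 2 \<times> 2"
  assumes "patch V E" and "dappled V E \<psi> \<phi>"
  shows "\<exists>f. dappled_hom_to_T V E \<psi> \<phi> f"
proof -
  obtain \<sigma> f0 where "simple_graph V E" "connected_graph V E" and plane: "plane_map V E \<sigma>"
    and triangles: "\<forall>g\<in>faces E \<sigma>. g \<noteq> f0 \<longrightarrow> card g = 3"
    using assms(1) by (auto simp: patch_def)
  then interpret rotation_graph V E \<sigma>
    by unfold_locales (simp_all add: plane_map_def)
  have proper: "\<psi> v - \<psi> u \<noteq> 0" "\<phi> v - \<phi> u \<noteq> 0" if "E u v" for u v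
    using assms(2) that unfolding dappled_def proper_coloring_def by (metis eq_iff_diff_eq_0)+
  define s where "s u v = step_of (\<psi> v - \<psi> u) (\<phi> v - \<phi> u)" for u v
  have "s v u = - s u v" if "E u v" for u v
    using step_of_uminus[OF proper[OF that]] by (simp add: s_def)
  moreover have "s u v + s v w + s w u = 0" if "E u v" "E v w" "E w u" for u v w
    using step_of_add[OF proper[OF that(1)] proper[OF that(2)]] proper[OF that(3)]
      step_of_uminus[OF proper[OF that(3)]] by (simp add: s_def)
  ultimately obtain P where P: "\<And>u v. E u v \<Longrightarrow> s u v = P v - P u"
    using lattice_potential[OF plane triangles, of s] by blast
  obtain v0 where "v0 \<in> V"
    using connected by (auto simp: connected_graph_def)
  obtain p0 where "T_hue p0 = \<psi> v0" "T_color p0 = \<phi> v0"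
    using T_hue_color_surj by blast
  then have "dappled_hom_to_T V E \<psi> \<phi> (\<lambda>v. P v - P v0 + p0)"
    using P proper by (intro dappled_hom_to_T_if_steps[OF connected \<open>v0 \<in> V\<close>]) (simp_all add: s_def)
  then show ?thesis
    by blast
qed

end
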